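(* Let $\lambda=(\lambda_1,\dots,\lambda_r)$ be a partition of $n\ge1$. The Sprague–Grundy value $\mathbb{SG}(\mathcal{D}(\lambda))$ can be computed in $O(\log r)\le O(\log n)$ time units.
   Context: A partition of $n$ is a non-increasing sequence $\lambda_1\ge\dots\ge\lambda_r>0$ of integers with sum $n$, given as input as the list $(\lambda_1,\dots,\lambda_r)$ with random access to its entries. For non-negative $i,j$, $\lambda[i,j]$ is $(\lambda_{i+1}-j,\dots,\lambda_r-j)$ with all non-positive entries removed. Downright: positions $\mathcal{D}(\mu)$, $\mu$ nonempty with $s$ parts; move to $\mathcal{D}(\mu[1,0])$ allowed iff $s>1$, move to $\mathcal{D}(\mu[0,1])$ allowed iff $\mu_1>1$. Normal play; $\mathbb{SG}(A)=\operatorname{mex}\{\mathbb{SG}(B):A\to B\}$. A time unit is any of: reading one integer (entry) of the input, one basic arithmetic operation on integers (addition, subtraction, multiplication or division by 2, parity, comparison), or computing the mex of a set of at most two integers from $\{0,1,2\}$. *)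

theory Defs
  imports Main "HOL-Library.Discrete_Functions"
begin

definition is_partition :: "nat list \<Rightarrow> bool" where
  "is_partition lam \<longleftrightarrow> lam \<noteq> [] \<and> sorted_wrt (\<ge>) lam \<and> (\<forall>x\<in>set lam. x > 0)"

text \<open>mu[0,1]: subtract 1 from every part and drop the non-positive entries;
  mu[1,0] is tl mu.\<close>
definition shift :: "nat list \<Rightarrow> nat list" where
  "shift mu = filter (\<lambda>x. x > 0) (map (\<lambda>x. x - 1) mu)"

definition mex :: "nat set \<Rightarrow> nat" where
  "mex S = (LEAST k. k \<notin> S)"

lemma sum_list_shift_le: "sum_list (shift mu) + length mu \<le> sum_list mu + length mu"
  unfolding shift_def by (induction mu) auto

lemma sum_list_shift_lt: "mu \<noteq> [] \<Longrightarrow> hd mu > 1 \<Longrightarrow> sum_list (shift mu) < sum_list mu"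
  unfolding shift_def by (cases mu) (auto, induct_tac list, auto)

lemma length_shift_le: "length (shift mu) \<le> length mu"
  unfolding shift_def by simp

text \<open>Sprague-Grundy value of the Downright position D(mu): moves to D(mu[1,0]) if mu has
  more than one part, to D(mu[0,1]) if mu_1 > 1.\<close>
function sgD :: "nat list \<Rightarrow> nat" where
  "sgD mu = mex ((if length mu > 1 then {sgD (tl mu)} else {})
               \<union> (if mu \<noteq> [] \<and> hd mu > 1 then {sgD (shift mu)} else {}))"
  by auto
termination
proof (relation "measure (\<lambda>mu. length mu + sum_list mu)")
  fix mu :: "nat list"
  assume "1 < length mu"
  then show "(tl mu, mu) \<in> measure (\<lambda>mu. length mu + sum_list mu)"
    by (cases mu) auto
next
  fix mu :: "nat list"
  assume "mu \<noteq> [] \<and> 1 < hd mu"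
  then show "(shift mu, mu) \<in> measure (\<lambda>mu. length mu + sum_list mu)"
    using sum_list_shift_lt[of mu] length_shift_le[of mu] by auto
qed auto

text \<open>Every executed instruction costs one time unit.
  ReadEntry d s reads the entry lambda_i (1-indexed) where i is the content of register s
  (0 if i is out of range).\<close>
datatype instr =
    Const nat int
  | ReadEntry nat nat
  | Add nat nat nat
  | Sub nat nat nat
  | Mul nat nat nat
  | Half nat nat
  | Parity nat nat
  | Less nat nat nat
  | Equal nat nat nat
  | Mex2 nat nat nat
  | Jz nat nat
  | Jmp nat
  | Halt nat

type_synonym config = "nat \<times> (nat \<Rightarrow> int)"

definition read_entry :: "nat list \<Rightarrow> int \<Rightarrow> int" where
  "read_entry lam i = (if 1 \<le> i \<and> nat i \<le> length lam then int (lam ! (nat i - 1)) else 0)"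

definition mex_int :: "int \<Rightarrow> int \<Rightarrow> int" where
  "mex_int a b = int (LEAST k::nat. int k \<noteq> a \<and> int k \<noteq> b)"

fun step :: "nat list \<Rightarrow> instr \<Rightarrow> config \<Rightarrow> config" where
  "step lam (Const d c) (pc, R) = (Suc pc, R(d := c))"
| "step lam (ReadEntry d s) (pc, R) = (Suc pc, R(d := read_entry lam (R s)))"
| "step lam (Add d a b) (pc, R) = (Suc pc, R(d := R a + R b))"
| "step lam (Sub d a b) (pc, R) = (Suc pc, R(d := R a - R b))"
| "step lam (Mul d a b) (pc, R) = (Suc pc, R(d := R a * R b))"
| "step lam (Half d a) (pc, R) = (Suc pc, R(d := R a div 2))"
| "step lam (Parity d a) (pc, R) = (Suc pc, R(d := R a mod 2))"
| "step lam (Less d a b) (pc, R) = (Suc pc, R(d := (if R a < R b then 1 else 0)))"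
| "step lam (Equal d a b) (pc, R) = (Suc pc, R(d := (if R a = R b then 1 else 0)))"
| "step lam (Mex2 d a b) (pc, R) = (Suc pc, R(d := mex_int (R a) (R b)))"
| "step lam (Jz a t) (pc, R) = (if R a = 0 then t else Suc pc, R)"
| "step lam (Jmp t) (pc, R) = (t, R)"
| "step lam (Halt d) (pc, R) = (pc, R)"

text \<open>exec P lam k c = Some v iff, started in configuration c, the program halts
  within k executed instructions (the Halt included) with output v.\<close>
fun exec :: "instr list \<Rightarrow> nat list \<Rightarrow> nat \<Rightarrow> config \<Rightarrow> int option" where
  "exec P lam 0 c = None"
| "exec P lam (Suc k) (pc, R) =
     (if pc < length P then
        (case P ! pc of
           Halt d \<Rightarrow> Some (R d)
         | i \<Rightarrow> exec P lam k (step lam i (pc, R)))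
      else None)"

definition init_config :: "nat list \<Rightarrow> config" where
  "init_config lam = (0, (\<lambda>_. 0)(0 := int (length lam)))"

end

theory Submission
  imports Defs
begin

text \<open>If the second part of \<open>\<mu>\<close> is at least 2, then \<open>D(\<mu>)\<close> and \<open>D(\<mu>[1,1])\<close> have the same
  Sprague-Grundy value: every option of \<open>\<mu>[1,1]\<close> has the value of an option of \<open>\<mu>\<close>, and
  \<open>\<mu>[1,1]\<close> is itself an option of both options of \<open>\<mu>\<close>. Iterating this along the diagonal,
  with \<open>k\<close> the side of the Durfee square of \<open>\<lambda>\<close> and \<open>j\<close> the number of parts \<open>\<ge> k\<close>, reduces
  \<open>\<lambda>\<close> to the hook \<open>\<lambda>[k-1,k-1] = (\<lambda>\<^sub>k - k + 1, 1, \<dots>, 1)\<close> with \<open>j - k + 1\<close> parts, whose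
  value only depends on the parities of its arm and leg. Since \<open>\<lambda>\<close> is non-increasing, \<open>k\<close> and
  \<open>j\<close> are found by two binary searches over the index range \<open>[1, r]\<close>, which take \<open>O(log r)\<close>
  time units on the register machine.\<close>

lemma mex_eqI: "k \<notin> S \<Longrightarrow> (\<And>i. i < k \<Longrightarrow> i \<in> S) \<Longrightarrow> mex S = k"
  unfolding mex_def by (rule Least_equality) (auto simp: not_less[symmetric])

lemma mex_notin: "finite S \<Longrightarrow> mex S \<notin> S"
  unfolding mex_def by (rule LeastI_ex) (use ex_new_if_finite infinite_UNIV_nat in blast)

lemma less_mex_in: "i < mex S \<Longrightarrow> i \<in> S"
  unfolding mex_def using not_less_Least by blast

lemma mex_empty [simp]: "mex {} = 0"
  by (rule mex_eqI) auto

lemma mex_singleton: "mex {a} = (if a = 0 then 1 else 0)"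
  by (cases "a = 0") (auto intro!: mex_eqI)

lemma mex_eq_mex_subset: "T \<subseteq> S \<Longrightarrow> mex T \<notin> S \<Longrightarrow> mex S = mex T"
  by (rule mex_eqI) (auto dest: less_mex_in)

definition moves :: "nat list \<Rightarrow> nat list set" where
  "moves mu = (if 1 < length mu then {tl mu} else {}) \<union> (if mu \<noteq> [] \<and> 1 < hd mu then {shift mu} else {})"

declare sgD.simps [simp del]

lemma sgD_eq_mex_moves: "sgD mu = mex (sgD ` moves mu)"
  by (subst sgD.simps) (simp add: moves_def)

lemma sgD_move_neq: "nu \<in> moves mu \<Longrightarrow> sgD nu \<noteq> sgD mu"
  using mex_notin[of "sgD ` moves mu"] sgD_eq_mex_moves[of mu] by (auto simp: moves_def)

lemma shift_Nil [simp]: "shift [] = []"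
  by (simp add: shift_def)

lemma shift_Cons [simp]: "shift (x # xs) = (if 1 < x then (x - 1) # shift xs else shift xs)"
  by (auto simp: shift_def)

lemma sorted_shift: "sorted_wrt (\<ge>) xs \<Longrightarrow> sorted_wrt (\<ge>) (shift xs)"
  by (induction xs) (auto simp: shift_def)

lemma shift_eq_Nil_iff: "sorted_wrt (\<ge>) xs \<Longrightarrow> shift xs = [] \<longleftrightarrow> xs = [] \<or> hd xs \<le> 1"
proof (induction xs)
  case (Cons a xs)
  then show ?case by (cases xs) auto
qed simp

lemma sgD_diagonal:
  "sorted_wrt (\<ge>) mu \<Longrightarrow> 1 < length mu \<Longrightarrow> 2 \<le> mu ! 1 \<Longrightarrow> sgD mu = sgD (shift (tl mu))"
proof (induction mu rule: sgD.induct)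
  case (1 mu)
  obtain a c rest where mu: "mu = a # c # rest"
    using "1.prems"(2) by (cases mu; cases "tl mu") auto
  have c: "2 \<le> c" "c \<le> a" and sorted_rest: "sorted_wrt (\<ge>) (c # rest)" "\<forall>z\<in>set rest. z \<le> c"
    using "1.prems" mu by auto
  define nu where "nu = shift (c # rest)"
  have nu: "nu = (c - 1) # shift rest" and shift_mu: "shift mu = (a - 1) # nu"
    using mu c by (auto simp: nu_def)
  have "sgD (c # rest) = sgD (shift rest)" if "shift rest \<noteq> []"
  proof -
    have "rest \<noteq> []" "2 \<le> hd rest"
      using that shift_eq_Nil_iff[of rest] sorted_rest by auto
    then show ?thesis
      using "1.IH"(1) sorted_rest mu by (cases rest) auto
  qed
  moreover have "sgD (shift mu) = sgD (shift nu)" if "2 < c"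
    using "1.IH"(2) sorted_shift[OF "1.prems"(1)] that mu c by (auto simp: shift_mu nu)
  ultimately have "sgD ` moves nu \<subseteq> sgD ` moves mu"
    using c by (auto simp: moves_def nu mu shift_mu)
  moreover have "sgD nu \<notin> sgD ` moves mu"
    using sgD_move_neq[of nu "c # rest"] sgD_move_neq[of nu "shift mu"] c
    by (auto simp: moves_def nu mu shift_mu)
  ultimately show ?case
    using mex_eq_mex_subset by (metis sgD_eq_mex_moves mu list.sel(3) nu_def)
qed

definition cut_square :: "nat list \<Rightarrow> nat \<Rightarrow> nat list" where
  "cut_square mu m = filter (\<lambda>x. 0 < x) (map (\<lambda>x. x - m) (drop m mu))"

lemma sorted_cut_square:
  assumes "sorted_wrt (\<ge>) mu"
  shows "sorted_wrt (\<ge>) (cut_square mu m)"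
proof -
  have "sorted_wrt (\<ge>) (drop m mu)"
    using assms by (rule sorted_wrt_drop)
  then show ?thesis
    unfolding cut_square_def
    by (intro sorted_wrt_filter) (auto simp: sorted_wrt_map elim!: sorted_wrt_mono_rel[rotated])
qed

lemma shift_filter_map_minus:
  "shift (filter (\<lambda>x. 0 < x) (map (\<lambda>x. x - m) xs)) = filter (\<lambda>x. 0 < x) (map (\<lambda>x. x - Suc m) xs)"
  by (induction xs) auto

lemma shift_tl_cut_square:
  "m < length mu \<Longrightarrow> m < mu ! m \<Longrightarrow> shift (tl (cut_square mu m)) = cut_square mu (Suc m)"
  by (simp add: cut_square_def Cons_nth_drop_Suc[symmetric] shift_filter_map_minus drop_Suc tl_drop)

lemma cut_square_0: "\<forall>x\<in>set mu. 0 < x \<Longrightarrow> cut_square mu 0 = mu"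
  by (simp add: cut_square_def)

lemma sgD_cut_square:
  assumes "is_partition mu" "m < length mu" "m < mu ! m"
  shows "sgD (cut_square mu m) = sgD mu"
  using assms(2,3)
proof (induction m)
  case 0
  then show ?case using assms(1) by (simp add: is_partition_def cut_square_0)
next
  case (Suc m)
  have sorted: "sorted_wrt (\<ge>) mu"
    using assms(1) by (simp add: is_partition_def)
  have "mu ! Suc m \<le> mu ! m"
    using sorted_wrt_nth_less[OF sorted, of m "Suc m"] Suc.prems(1) by simp
  then have "sgD (cut_square mu m) = sgD mu"
    using Suc by simp
  moreover have "drop m mu = mu ! m # mu ! Suc m # drop (Suc (Suc m)) mu"
    using Suc.prems by (simp add: Cons_nth_drop_Suc)
  then have "1 < length (cut_square mu m)" "cut_square mu m ! 1 = mu ! Suc m - m"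
    using Suc.prems \<open>mu ! Suc m \<le> mu ! m\<close> by (simp_all add: cut_square_def)
  moreover have "m < mu ! m"
    using Suc.prems \<open>mu ! Suc m \<le> mu ! m\<close> by simp
  ultimately show ?case
    using sgD_diagonal[OF sorted_cut_square[OF sorted], of m] shift_tl_cut_square[of m mu] Suc.prems
    by simp
qed

lemma sgD_row: "sgD [Suc a] = a mod 2"
proof (induction a)
  case 0
  then show ?case by (subst sgD_eq_mex_moves) (simp add: moves_def)
next
  case (Suc a)
  then show ?case by (subst sgD_eq_mex_moves) (simp add: moves_def mex_singleton mod_Suc)
qed

lemma sgD_column: "sgD (replicate (Suc m) 1) = m mod 2"
proof (induction m)
  case 0
  then show ?case by (subst sgD_eq_mex_moves) (simp add: moves_def)
next
  case (Suc m)
  then show ?case by (subst sgD_eq_mex_moves) (simp add: moves_def mex_singleton mod_Suc)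
qed

definition hook :: "nat \<Rightarrow> nat \<Rightarrow> nat list" where
  "hook a l = a # replicate (l - 1) 1"

definition hook_option_values :: "nat \<Rightarrow> nat \<Rightarrow> nat set" where
  "hook_option_values a l = (if 1 < a then {a mod 2} else {}) \<union> (if 1 < l then {l mod 2} else {})"

lemma shift_replicate [simp]: "shift (replicate n x) = (if 1 < x then replicate n (x - 1) else [])"
  by (induction n) auto

lemma sgD_hook: "sgD (hook a l) = mex (hook_option_values a l)"
proof -
  have "sgD (replicate (l - 1) 1) = l mod 2" if l: "1 < l"
  proof -
    obtain m where "l = Suc (Suc m)" using l by (auto simp: less_iff_Suc_add)
    then show ?thesis using sgD_column[of m] by simp
  qed
  moreover have "sgD [a - 1] = a mod 2" if a: "1 < a"
  proof -
    obtain m where "a = Suc (Suc m)" using a by (auto simp: less_iff_Suc_add)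
    then show ?thesis using sgD_row[of m] by simp
  qed
  ultimately show ?thesis
    by (subst sgD_eq_mex_moves) (auto simp: moves_def hook_def hook_option_values_def)
qed

lemma sorted_ge_drop_le_nth:
  assumes "sorted_wrt (\<ge>) (mu :: 'a :: linorder list)" "x \<in> set (drop i mu)"
  shows "x \<le> mu ! i"
proof -
  have i: "i < length mu"
    using assms(2) by (cases "i < length mu") auto
  have "sorted_wrt (\<ge>) (mu ! i # drop (Suc i) mu)" "x \<in> set (mu ! i # drop (Suc i) mu)"
    using sorted_wrt_drop[OF assms(1), of i] assms(2) by (simp_all add: Cons_nth_drop_Suc[OF i])
  then show ?thesis
    by auto
qed

lemma sorted_ge_take_ge_nth:
  assumes "sorted_wrt (\<ge>) (mu :: 'a :: linorder list)" "i < length mu" "x \<in> set (take (Suc i) mu)"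
  shows "mu ! i \<le> x"
proof -
  have "sorted_wrt (\<ge>) (take i mu @ [mu ! i])" "x \<in> set (take i mu @ [mu ! i])"
    using sorted_wrt_take[OF assms(1), of "Suc i"] assms(3) by (simp_all add: take_Suc_conv_app_nth[OF assms(2)])
  then show ?thesis
    by (auto simp: sorted_wrt_append)
qed

lemma filter_ge_eq_take:
  assumes "sorted_wrt (\<ge>) (mu :: 'a :: linorder list)" "j \<le> length mu"
    and "0 < j \<longrightarrow> k \<le> mu ! (j - 1)" "j < length mu \<longrightarrow> mu ! j < k"
  shows "filter ((\<le>) k) mu = take j mu"
proof -
  have "k \<le> x" if x: "x \<in> set (take j mu)" for x
  proof -
    have "0 < j"
      using x by (cases j) auto
    then have "mu ! (j - 1) \<le> x"
      using sorted_ge_take_ge_nth[OF assms(1), of "j - 1" x] x assms(2) by simp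
    then show ?thesis
      using assms(3) \<open>0 < j\<close> by (meson order_trans)
  qed
  moreover have "x < k" if x: "x \<in> set (drop j mu)" for x
  proof -
    have "j < length mu"
      using x by (cases "j < length mu") auto
    then show ?thesis
      using sorted_ge_drop_le_nth[OF assms(1) x] assms(4) by auto
  qed
  ultimately have "filter ((\<le>) k) (take j mu) = take j mu" "filter ((\<le>) k) (drop j mu) = []"
    by (auto simp: filter_id_conv filter_empty_conv not_le)
  then show ?thesis
    by (metis append.right_neutral append_take_drop_id filter_append)
qed

definition durfee_side :: "nat list \<Rightarrow> nat \<Rightarrow> bool" where
  "durfee_side mu k \<longleftrightarrow>
    1 \<le> k \<and> k \<le> length mu \<and> k \<le> mu ! (k - 1) \<and> (k < length mu \<longrightarrow> mu ! k \<le> k)"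

lemma filter_pos_map_minus_eq_replicate:
  "\<forall>x\<in>set xs. x \<le> Suc m \<Longrightarrow>
    filter (\<lambda>x. 0 < x) (map (\<lambda>x. x - m) xs) = replicate (length (filter ((\<le>) (Suc m)) xs)) 1"
  by (induction xs) auto

lemma cut_square_durfee:
  assumes "is_partition mu" "durfee_side mu k"
  shows "cut_square mu (k - 1) =
    hook (mu ! (k - 1) - (k - 1)) (length (filter ((\<le>) k) mu) - (k - 1))"
proof -
  have sorted: "sorted_wrt (\<ge>) mu" and k: "1 \<le> k" "k \<le> length mu" "k \<le> mu ! (k - 1)"
    using assms by (auto simp: is_partition_def durfee_side_def)
  have "\<forall>x\<in>set (drop k mu). x \<le> k"
    using assms(2) sorted_ge_drop_le_nth[OF sorted, of _ k] by (fastforce simp: durfee_side_def)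
  then have tail: "filter (\<lambda>x. 0 < x) (map (\<lambda>x. x - (k - 1)) (drop k mu))
      = replicate (length (filter ((\<le>) k) (drop k mu))) 1"
    using filter_pos_map_minus_eq_replicate[of "drop k mu" "k - 1"] k by simp
  have "length (filter ((\<le>) k) mu) =
      length (filter ((\<le>) k) (take k mu)) + length (filter ((\<le>) k) (drop k mu))"
    by (metis append_take_drop_id filter_append length_append)
  also have "filter ((\<le>) k) (take k mu) = take k mu"
    using sorted_ge_take_ge_nth[OF sorted, of "k - 1"] k by (force simp: filter_id_conv)
  finally have "length (filter ((\<le>) k) mu) = k + length (filter ((\<le>) k) (drop k mu))"
    using k by simp
  moreover have "drop (k - 1) mu = mu ! (k - 1) # drop k mu"
    using k Cons_nth_drop_Suc[of "k - 1" mu] by simp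
  ultimately show ?thesis
    using tail k by (simp add: cut_square_def hook_def)
qed

theorem sgD_durfee:
  assumes "is_partition mu" "durfee_side mu k"
  shows "sgD mu =
    mex (hook_option_values (mu ! (k - 1) - (k - 1)) (length (filter ((\<le>) k) mu) - (k - 1)))"
proof -
  have "sgD mu = sgD (cut_square mu (k - 1))"
    using sgD_cut_square[OF assms(1), of "k - 1"] assms(2) by (force simp: durfee_side_def)
  then show ?thesis
    using cut_square_durfee[OF assms] sgD_hook by simp
qed

definition reaches :: "instr list \<Rightarrow> nat list \<Rightarrow> nat \<Rightarrow> config \<Rightarrow> config \<Rightarrow> bool" where
  "reaches P lam N c c' \<longleftrightarrow> (\<exists>n\<le>N. \<forall>m. exec P lam (n + m) c = exec P lam m c')"

lemma reaches_refl [simp]: "reaches P lam N c c"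
  unfolding reaches_def by auto

lemma reaches_trans:
  assumes "reaches P lam N c c'" "reaches P lam N' c' c''"
  shows "reaches P lam (N + N') c c''"
proof -
  obtain n n' where "n \<le> N" "n' \<le> N'"
    "\<forall>m. exec P lam (n + m) c = exec P lam m c'" "\<forall>m. exec P lam (n' + m) c' = exec P lam m c''"
    using assms unfolding reaches_def by blast
  then show ?thesis
    unfolding reaches_def by (intro exI[of _ "n + n'"]) (auto simp: add.assoc)
qed

lemma reaches_mono: "reaches P lam N c c' \<Longrightarrow> N \<le> N' \<Longrightarrow> reaches P lam N' c c'"
  unfolding reaches_def by (meson order_trans)

lemma reaches_step:
  assumes "0 < N" "pc < length P" "\<forall>d. P ! pc \<noteq> Halt d"
    and "reaches P lam (N - 1) (step lam (P ! pc) (pc, R)) c"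
  shows "reaches P lam N (pc, R) c"
proof -
  have "\<forall>m. exec P lam (1 + m) (pc, R) = exec P lam m (step lam (P ! pc) (pc, R))"
    using assms(2,3) by (auto split: instr.split)
  then have "reaches P lam 1 (pc, R) (step lam (P ! pc) (pc, R))"
    unfolding reaches_def by blast
  from reaches_trans[OF this assms(4)] show ?thesis
    using assms(1) by simp
qed

lemma exec_reaches_Halt:
  assumes "reaches P lam N c (pc, R)" "pc < length P" "P ! pc = Halt d" "N < F"
  shows "exec P lam F c = Some (R d)"
proof -
  obtain n where n: "n \<le> N" "\<forall>m. exec P lam (n + m) c = exec P lam m (pc, R)"
    using assms(1) unfolding reaches_def by blast
  define m where "m = F - n - 1"
  have "F = n + Suc m"
    using n(1) assms(4) unfolding m_def by simp
  then have "exec P lam F c = exec P lam (Suc m) (pc, R)"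
    using n(2) by metis
  then show ?thesis
    using assms(2,3) by simp
qed

definition code_at :: "instr list \<Rightarrow> nat \<Rightarrow> instr list \<Rightarrow> bool" where
  "code_at P p is \<longleftrightarrow> take (length is) (drop p P) = is"

lemma code_at_nth:
  assumes "code_at P p is" "p \<le> pc" "pc < p + length is"
  shows "pc < length P \<and> P ! pc = is ! (pc - p)"
proof -
  have "length is \<le> length P - p"
    using arg_cong[OF assms(1)[unfolded code_at_def], of length]
    by (simp add: min_def split: if_splits)
  moreover have "is ! (pc - p) = drop p P ! (pc - p)"
    using assms unfolding code_at_def
    by (metis add_diff_inverse_nat diff_less_mono le_add1 less_diff_conv2 not_less nth_take add.commute)
  ultimately show ?thesis
    using assms(2,3) by auto
qed

definition bsearch_code :: "nat \<Rightarrow> nat \<Rightarrow> instr list" where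
  "bsearch_code b c =
    [Sub 5 3 2, Less 5 6 5, Jz 5 (b + 12),
     Add 4 2 3, Half 4 4, ReadEntry 5 4, Less 5 5 c, Jz 5 (b + 10),
     Mul 3 4 6, Jmp b,
     Mul 2 4 6, Jmp b]"

lemma bsearch_exit:
  assumes "code_at P b (bsearch_code b c)" "R 6 = 1" "R 3 = R 2 + 1"
  shows "reaches P lam 3 (b, R) (b + 12, R(5 := 0))"
proof -
  note at = code_at_nth[OF assms(1)]
  show ?thesis
    by (rule reaches_step; simp add: at bsearch_code_def assms)+
qed

text \<open>The
  threshold is read while register 4 holds \<open>i\<close>, so \<open>c = 4\<close> tests \<open>i \<le> \<lambda>\<^sub>i\<close>.\<close>

definition entry_ge :: "nat list \<Rightarrow> (nat \<Rightarrow> int) \<Rightarrow> nat \<Rightarrow> int \<Rightarrow> bool" where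
  "entry_ge lam R c i \<longleftrightarrow> (R(4 := i)) c \<le> read_entry lam i"

lemma bsearch_halve:
  assumes "code_at P b (bsearch_code b c)" "c \<noteq> 5" "R 6 = 1" "R 2 + 1 < R 3"
    and mid: "mid = (R 2 + R 3) div 2"
  shows "\<exists>R'. reaches P lam 10 (b, R) (b, R') \<and>
    (\<forall>x. x \<notin> {2, 3, 4, 5} \<longrightarrow> R' x = R x) \<and>
    (if entry_ge lam R c mid then R' 2 = mid \<and> R' 3 = R 3 else R' 2 = R 2 \<and> R' 3 = mid)"
proof -
  note at = code_at_nth[OF assms(1)]
  have gap: "1 < R 3 - R 2"
    using assms(4) by simp
  show ?thesis
  proof (cases "entry_ge lam R c mid")
    case True
    then have cmp: "\<not> read_entry lam mid < (if c = 4 then mid else R c)"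
      by (simp add: entry_ge_def)
    have "reaches P lam 10 (b, R) (b, R(4 := mid, 5 := 0, 2 := mid))"
      by (rule reaches_step; simp add: at bsearch_code_def assms(2,3) gap mid[symmetric] cmp)+
    then show ?thesis
      using True by (intro exI[of _ "R(4 := mid, 5 := 0, 2 := mid)"]) auto
  next
    case False
    then have cmp: "read_entry lam mid < (if c = 4 then mid else R c)"
      by (simp add: entry_ge_def)
    have "reaches P lam 10 (b, R) (b, R(4 := mid, 5 := 1, 3 := mid))"
      by (rule reaches_step; simp add: at bsearch_code_def assms(2,3) gap mid[symmetric] cmp)+
    then show ?thesis
      using False by (intro exI[of _ "R(4 := mid, 5 := 1, 3 := mid)"]) auto
  qed
qed

lemma entry_ge_frame:
  "\<forall>x. x \<notin> {2, 3, 4, 5} \<longrightarrow> R' x = R x \<Longrightarrow> c \<notin> {2, 3, 5} \<Longrightarrow>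
    entry_ge lam R' c = entry_ge lam R c"
  by (auto simp: entry_ge_def fun_eq_iff)

lemma bsearch_reaches:
  assumes code: "code_at P b (bsearch_code b c)" and c: "c \<notin> {2, 3, 5}"
    and "R 6 = 1" "R 2 < R 3" "R 3 - R 2 \<le> 2 ^ t"
    and "entry_ge lam R c (R 2)" "\<not> entry_ge lam R c (R 3)"
  shows "\<exists>R'. reaches P lam (10 * t + 3) (b, R) (b + 12, R') \<and>
    (\<forall>x. x \<notin> {2, 3, 4, 5} \<longrightarrow> R' x = R x) \<and>
    R 2 \<le> R' 2 \<and> R' 2 < R 3 \<and> entry_ge lam R c (R' 2) \<and> \<not> entry_ge lam R c (R' 2 + 1)"
  using assms(3-)
proof (induction t arbitrary: R)
  case 0
  then have adjacent: "R 3 = R 2 + 1"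
    by simp
  show ?case
    by (intro exI[of _ "R(5 := 0)"] conjI reaches_mono[OF bsearch_exit[OF code 0(1) adjacent]])
      (use 0 adjacent in auto)
next
  case (Suc t)
  show ?case
  proof (cases "R 3 = R 2 + 1")
    case True
    show ?thesis
      by (intro exI[of _ "R(5 := 0)"] conjI reaches_mono[OF bsearch_exit[OF code Suc.prems(1) True]])
        (use Suc.prems True in auto)
  next
    case False
    define mid where "mid = (R 2 + R 3) div 2"
    have gap: "R 2 + 1 < R 3"
      using False Suc.prems(2) by simp
    then have mid_bounds: "R 2 < mid" "mid < R 3" "mid - R 2 \<le> 2 ^ t" "R 3 - mid \<le> 2 ^ t"
      using Suc.prems(3) unfolding mid_def by auto
    obtain R'' where R'': "reaches P lam 10 (b, R) (b, R'')"
      "\<forall>x. x \<notin> {2, 3, 4, 5} \<longrightarrow> R'' x = R x"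
      "if entry_ge lam R c mid then R'' 2 = mid \<and> R'' 3 = R 3 else R'' 2 = R 2 \<and> R'' 3 = mid"
      using bsearch_halve[OF code _ Suc.prems(1) gap mid_def] c by blast
    have same_test: "entry_ge lam R'' c = entry_ge lam R c"
      using entry_ge_frame[OF R''(2) c] .
    obtain R' where R': "reaches P lam (10 * t + 3) (b, R'') (b + 12, R')"
      "\<forall>x. x \<notin> {2, 3, 4, 5} \<longrightarrow> R' x = R'' x" "R'' 2 \<le> R' 2" "R' 2 < R'' 3"
      "entry_ge lam R c (R' 2)" "\<not> entry_ge lam R c (R' 2 + 1)"
      using Suc.IH[of R''] R''(2,3) Suc.prems mid_bounds unfolding same_test
      by (auto split: if_splits)
    have "reaches P lam (10 * Suc t + 3) (b, R) (b + 12, R')"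
      using reaches_trans[OF R''(1) R'(1)] by simp
    then show ?thesis
      using R' R'' mid_bounds Suc.prems by (intro exI[of _ R']) (auto split: if_splits)
  qed
qed

definition parity_code :: "nat \<Rightarrow> nat \<Rightarrow> nat \<Rightarrow> instr list" where
  "parity_code p d x = [Const d (-1), Less 5 6 x, Jz 5 (p + 4), Parity d x]"

lemma parity_reaches:
  assumes code: "code_at P p (parity_code p d x)" and "R 6 = 1" "d \<notin> {5, 6, x}" "x \<notin> {5, 6}"
  shows "\<exists>R'. reaches P lam 4 (p, R) (p + 4, R') \<and>
    (\<forall>y. y \<notin> {d, 5} \<longrightarrow> R' y = R y) \<and> R' d = (if 1 < R x then R x mod 2 else -1)"
proof -
  note at = code_at_nth[OF code]
  have regs: "d \<noteq> 5" "d \<noteq> 6" "x \<noteq> d" "x \<noteq> 5" "x \<noteq> 6"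
    using assms(3,4) by auto
  have end_pc: "p + 4 = Suc (Suc (Suc (Suc p)))"
    by simp
  show ?thesis
  proof (cases "1 < R x")
    case True
    have "reaches P lam 4 (p, R) (p + 4, R(d := -1, 5 := 1, d := R x mod 2))"
      by (rule reaches_step; simp add: at parity_code_def assms(2) regs end_pc True)+
    then show ?thesis
      using True assms(3) by (intro exI[of _ "R(d := -1, 5 := 1, d := R x mod 2)"]) auto
  next
    case False
    have "reaches P lam 4 (p, R) (p + 4, R(d := -1, 5 := 0))"
      by (rule reaches_step; simp add: at parity_code_def assms(2) regs False)+
    then show ?thesis
      using False assms(3) by (intro exI[of _ "R(d := -1, 5 := 0)"]) auto
  qed
qed

text \<open>Registers: 0 holds \<open>r\<close> and 6 the constant 1; 2, 3, 4, 5 are the lower end, upper end,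
  midpoint and scratch register of the binary searches; 8 holds \<open>k\<close>; 7 and 9 the arm
  \<open>\<lambda>\<^sub>k - k + 1\<close> and the leg \<open>j - k + 1\<close> of the hook; 10 and 11 their option values, with
  \<open>-1\<close> (ignored by \<open>mex_int\<close>) for a missing option; 12 the result.\<close>

definition durfee_program :: "instr list" where
  "durfee_program =
     [Const 6 1, Const 2 1, Add 3 0 6]
   @ bsearch_code 3 4
   @ [ReadEntry 7 2, Sub 7 7 2, Add 7 7 6, Mul 8 2 6, Add 3 0 6]
   @ bsearch_code 20 8
   @ [Sub 9 2 8, Add 9 9 6]
   @ parity_code 34 10 7
   @ parity_code 38 11 9
   @ [Mex2 12 10 11, Halt 12]"

lemma length_durfee_program: "length durfee_program = 44"
  by (simp add: durfee_program_def bsearch_code_def parity_code_def)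

lemma durfee_program_code:
  "code_at durfee_program 0 [Const 6 1, Const 2 1, Add 3 0 6]"
  "code_at durfee_program 3 (bsearch_code 3 4)"
  "code_at durfee_program 15 [ReadEntry 7 2, Sub 7 7 2, Add 7 7 6, Mul 8 2 6, Add 3 0 6]"
  "code_at durfee_program 20 (bsearch_code 20 8)"
  "code_at durfee_program 32 [Sub 9 2 8, Add 9 9 6]"
  "code_at durfee_program 34 (parity_code 34 10 7)"
  "code_at durfee_program 38 (parity_code 38 11 9)"
  "code_at durfee_program 42 [Mex2 12 10 11, Halt 12]"
  by (simp_all add: code_at_def durfee_program_def bsearch_code_def parity_code_def)

lemma read_entry_nth:
  "1 \<le> i \<Longrightarrow> i \<le> int (length lam) \<Longrightarrow> read_entry lam i = int (lam ! (nat i - 1))"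
  by (simp add: read_entry_def nat_le_iff)

lemma read_entry_beyond: "int (length lam) < i \<Longrightarrow> read_entry lam i = 0"
  by (auto simp: read_entry_def)

lemma durfee_side_reaches:
  assumes "is_partition lam" "length lam \<le> 2 ^ t"
  shows "\<exists>R k. reaches durfee_program lam (10 * t + 6) (init_config lam) (15, R) \<and>
    R 0 = int (length lam) \<and> R 6 = 1 \<and> R 2 = int k \<and> durfee_side lam k"
proof -
  define r where "r = length lam"
  define R1 :: "nat \<Rightarrow> int" where "R1 = (\<lambda>_. 0)(0 := int r, 6 := 1, 2 := 1, 3 := int r + 1)"
  note at = code_at_nth[OF durfee_program_code(1)]
  have "reaches durfee_program lam 3 (init_config lam) (3, R1)"
    unfolding R1_def r_def init_config_def
    by (rule reaches_step; simp add: at length_durfee_program numeral_3_eq_3)+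
  have "1 \<le> lam ! 0" and nonempty: "1 \<le> r"
    using assms(1) unfolding r_def by (cases lam; auto simp: is_partition_def)+
  then have low: "entry_ge lam R1 4 (R1 2)"
    using read_entry_nth[of 1 lam] by (simp add: entry_ge_def R1_def r_def)
  have high: "\<not> entry_ge lam R1 4 (R1 3)"
    using read_entry_beyond[of lam "int r + 1"] by (simp add: entry_ge_def R1_def r_def)
  have "int r \<le> 2 ^ t"
    using assms(2) unfolding r_def by (metis of_nat_le_iff of_nat_numeral of_nat_power)
  then have R1: "R1 6 = 1" "R1 2 < R1 3" "R1 3 - R1 2 \<le> 2 ^ t"
    using nonempty by (simp_all add: R1_def)
  obtain R where R: "reaches durfee_program lam (10 * t + 3) (3, R1) (15, R)"
    "\<forall>x. x \<notin> {2, 3, 4, 5} \<longrightarrow> R x = R1 x" "R1 2 \<le> R 2" "R 2 < R1 3"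
    "entry_ge lam R1 4 (R 2)" "\<not> entry_ge lam R1 4 (R 2 + 1)"
    using bsearch_reaches[OF durfee_program_code(2) _ R1 low high] by auto
  define k where "k = nat (R 2)"
  have k: "R 2 = int k" "1 \<le> k" "k \<le> r"
    using R(3,4) unfolding k_def R1_def by auto
  have "durfee_side lam k"
    using R(5,6) read_entry_nth[of "int k" lam] read_entry_nth[of "int k + 1" lam] k
    by (auto simp: durfee_side_def r_def entry_ge_def nat_add_distrib)
  moreover have "reaches durfee_program lam (10 * t + 6) (init_config lam) (15, R)"
    using reaches_trans[OF \<open>reaches durfee_program lam 3 (init_config lam) (3, R1)\<close> R(1)]
    by (simp add: add.commute)
  ultimately show ?thesis
    using R(2) k by (auto simp: R1_def r_def)
qed

lemma durfee_leg_reaches: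
  assumes "is_partition lam" "length lam \<le> 2 ^ t" "durfee_side lam k"
    and R: "R 0 = int (length lam)" "R 6 = 1" "R 2 = int k"
  shows "\<exists>R'. reaches durfee_program lam (10 * t + 10) (15, R) (34, R') \<and> R' 6 = 1 \<and>
    R' 7 = int (lam ! (k - 1) - (k - 1)) \<and> R' 9 = int (length (filter ((\<le>) k) lam) - (k - 1))"
proof -
  define r where "r = length lam"
  have k: "1 \<le> k" "k \<le> r" "k \<le> lam ! (k - 1)"
    using assms(3) by (auto simp: durfee_side_def r_def)
  define R1 where "R1 = R(7 := read_entry lam (int k) - int k + 1, 8 := int k, 3 := int r + 1)"
  note at = code_at_nth[OF durfee_program_code(3)]
  have "reaches durfee_program lam 5 (15, R) (20, R1)"
    unfolding R1_def r_def by (rule reaches_step; simp add: at length_durfee_program R)+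
  have "R1 3 - R1 2 \<le> int r"
    using k R by (simp add: R1_def)
  also have "int r \<le> 2 ^ t"
    using assms(2) unfolding r_def by (metis of_nat_le_iff of_nat_numeral of_nat_power)
  finally have R1: "R1 6 = 1" "R1 2 < R1 3" "R1 3 - R1 2 \<le> 2 ^ t"
    using k R by (simp_all add: R1_def)
  have low: "entry_ge lam R1 8 (R1 2)"
    using read_entry_nth[of "int k" lam] k R by (simp add: entry_ge_def R1_def r_def)
  have high: "\<not> entry_ge lam R1 8 (R1 3)"
    using read_entry_beyond[of lam "int r + 1"] k by (simp add: entry_ge_def R1_def r_def)
  obtain R2 where R2: "reaches durfee_program lam (10 * t + 3) (20, R1) (32, R2)"
    "\<forall>x. x \<notin> {2, 3, 4, 5} \<longrightarrow> R2 x = R1 x" "R1 2 \<le> R2 2" "R2 2 < R1 3"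
    "entry_ge lam R1 8 (R2 2)" "\<not> entry_ge lam R1 8 (R2 2 + 1)"
    using bsearch_reaches[OF durfee_program_code(4) _ R1 low high] by auto
  define j where "j = nat (R2 2)"
  have j: "R2 2 = int j" "k \<le> j" "j \<le> r"
    using R2(3,4) R unfolding j_def R1_def by auto
  have "filter ((\<le>) k) lam = take j lam"
    using assms(1) R2(5,6) read_entry_nth[of "int j" lam] read_entry_nth[of "int j + 1" lam] j k
    by (intro filter_ge_eq_take) (auto simp: is_partition_def r_def entry_ge_def R1_def nat_add_distrib)
  then have leg: "length (filter ((\<le>) k) lam) = j"
    using j by (simp add: r_def)
  have regs: "R2 6 = 1" "R2 7 = read_entry lam (int k) - int k + 1" "R2 8 = int k"
    using R2(2) by (simp_all add: R1_def R)
  note at = code_at_nth[OF durfee_program_code(5)]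
  have "reaches durfee_program lam 2 (32, R2) (34, R2(9 := int j - int k + 1))"
    by (rule reaches_step; simp add: at length_durfee_program regs j(1))+
  then have "reaches durfee_program lam (10 * t + 10) (15, R) (34, R2(9 := int j - int k + 1))"
    by (rule reaches_mono[OF reaches_trans[OF reaches_trans[OF
          \<open>reaches durfee_program lam 5 (15, R) (20, R1)\<close> R2(1)]]]) simp
  moreover have "read_entry lam (int k) - int k + 1 = int (lam ! (k - 1) - (k - 1))"
    using read_entry_nth[of "int k" lam] k by (simp add: r_def)
  ultimately show ?thesis
    using regs leg j k by (intro exI[of _ "R2(9 := int j - int k + 1)"] conjI) auto
qed

lemma durfee_output_reaches:
  assumes "R 6 = 1"
  shows "\<exists>R'. reaches durfee_program lam 9 (34, R) (43, R') \<and>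
    R' 12 = mex_int (if 1 < R 7 then R 7 mod 2 else -1) (if 1 < R 9 then R 9 mod 2 else -1)"
proof -
  obtain R1 where R1: "reaches durfee_program lam 4 (34, R) (38, R1)"
    "\<forall>y. y \<notin> {10, 5} \<longrightarrow> R1 y = R y" "R1 10 = (if 1 < R 7 then R 7 mod 2 else -1)"
    using parity_reaches[OF durfee_program_code(6), of R lam] assms by auto
  obtain R2 where R2: "reaches durfee_program lam 4 (38, R1) (42, R2)"
    "\<forall>y. y \<notin> {11, 5} \<longrightarrow> R2 y = R1 y" "R2 11 = (if 1 < R1 9 then R1 9 mod 2 else -1)"
    using parity_reaches[OF durfee_program_code(7), of R1 lam] R1(2) assms by auto
  note at = code_at_nth[OF durfee_program_code(8)]
  have "reaches durfee_program lam 1 (42, R2) (43, R2(12 := mex_int (R2 10) (R2 11)))"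
    by (rule reaches_step; simp add: at length_durfee_program)+
  from reaches_trans[OF reaches_trans[OF R1(1) R2(1)] this]
  have "reaches durfee_program lam 9 (34, R) (43, R2(12 := mex_int (R2 10) (R2 11)))"
    by simp
  then show ?thesis
    using R1(2,3) R2(2,3) by (intro exI[of _ "R2(12 := mex_int (R2 10) (R2 11))"] conjI) auto
qed

lemma mex_int_hook:
  "mex_int (if 1 < int a then int a mod 2 else -1) (if 1 < int l then int l mod 2 else -1)
    = int (mex (hook_option_values a l))"
proof -
  have mod_2: "int n mod 2 = int (n mod 2)" for n :: nat
    by (metis of_nat_mod of_nat_numeral)
  have "(\<lambda>k. int k \<noteq> (if 1 < int a then int a mod 2 else -1) \<and> int k \<noteq> (if 1 < int l then int l mod 2 else -1))
      = (\<lambda>k. k \<notin> hook_option_values a l)"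
    by (auto simp: fun_eq_iff hook_option_values_def mod_2)
  then show ?thesis
    by (simp add: mex_int_def mex_def)
qed

lemma durfee_program_correct:
  assumes "is_partition lam" "length lam \<le> 2 ^ t"
  shows "\<exists>R. reaches durfee_program lam (20 * t + 25) (init_config lam) (43, R) \<and> R 12 = int (sgD lam)"
proof -
  obtain R k where R: "reaches durfee_program lam (10 * t + 6) (init_config lam) (15, R)"
    "R 0 = int (length lam)" "R 6 = 1" "R 2 = int k" and k: "durfee_side lam k"
    using durfee_side_reaches[OF assms] by blast
  obtain R' where R': "reaches durfee_program lam (10 * t + 10) (15, R) (34, R')" "R' 6 = 1"
    "R' 7 = int (lam ! (k - 1) - (k - 1))" "R' 9 = int (length (filter ((\<le>) k) lam) - (k - 1))"
    using durfee_leg_reaches[OF assms k R(2-4)] by blast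
  obtain R'' where R'': "reaches durfee_program lam 9 (34, R') (43, R'')"
    "R'' 12 = mex_int (if 1 < R' 7 then R' 7 mod 2 else -1) (if 1 < R' 9 then R' 9 mod 2 else -1)"
    using durfee_output_reaches[of R' lam] R'(2) by blast
  have "R'' 12 = int (sgD lam)"
    unfolding R''(2) R'(3,4) mex_int_hook sgD_durfee[OF assms(1) k] ..
  moreover have "reaches durfee_program lam (20 * t + 25) (init_config lam) (43, R'')"
    by (rule reaches_mono[OF reaches_trans[OF reaches_trans[OF R(1) R'(1)] R''(1)]]) simp
  ultimately show ?thesis
    by blast
qed

theorem mainTheorem14:
  "\<exists>(P :: instr list) (C :: nat).
     \<forall>lam. is_partition lam \<longrightarrow>
       exec P lam (C * (floor_log (length lam) + 1)) (init_config lam) = Some (int (sgD lam))"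
proof (intro exI allI impI)
  fix lam :: "nat list"
  assume "is_partition lam"
  define t where "t = floor_log (length lam) + 1"
  have "length lam \<le> 2 ^ t"
    using floor_log_exp2_gt[of "length lam"] unfolding t_def by simp
  then obtain R where R: "reaches durfee_program lam (20 * t + 25) (init_config lam) (43, R)"
    "R 12 = int (sgD lam)"
    using durfee_program_correct \<open>is_partition lam\<close> by blast
  have "43 < length durfee_program" "durfee_program ! 43 = Halt 12"
    using code_at_nth[OF durfee_program_code(8), of 43] by simp_all
  moreover have "20 * t + 25 < 46 * t"
    unfolding t_def by simp
  ultimately show "exec durfee_program lam (46 * (floor_log (length lam) + 1)) (init_config lam)
      = Some (int (sgD lam))"
    using exec_reaches_Halt[OF R(1)] R(2) unfolding t_def by simp
qed

end
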